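(* Let $d\in\{1,2\}$, and set $a_{N,1}=(c^2_{N,1}N^{1/2})^{-1/2}$ and $a_{N,2}=(c^2_{N,2}\log N)^{-1/2}$. For $1\le k\le N$ let $f_k=c_{N,d}\sum_{x\in\mathbb{Z}^d}h(k,x)p_0(k,x)$. Then $$\sum_{k=1}^N a_{N,d}f_k\Rightarrow \xi\quad(N\to\infty),$$ where $\xi$ is some Gaussian random variable and $\Rightarrow$ denotes convergence in distribution under $Q$.
   Context: $p_0(n,x)$ denotes the probability that simple (nearest-neighbour) random walk on $\mathbb{Z}^d$ started at $0$ is at $x$ at time $n$. The environment $h=\{h(n,x):n\in\mathbb{N},x\in\mathbb{Z}^d\}$ is i.i.d. with $h(n,x)=\pm1$ each with probability $1/2$ on a probability space $(H,\mathcal{G},Q)$. $(c_{N,d})$ is a sequence of positive numbers with $\lim_{N\to\infty}c_{N,1}^2N^{1/2}=0$ for $d=1$ and $\lim_{N\to\infty}c_{N,2}^2\log N=0$ for $d=2$. *)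

theory Defs
  imports "HOL-Probability.Probability"
begin

text \<open>Points of Z^d are represented as integer lists of length d.
  unit_shift d i s x moves coordinate i of x by s.\<close>

fun p0 :: "nat \<Rightarrow> nat \<Rightarrow> int list \<Rightarrow> real" where
  "p0 d 0 x = (if x = replicate d 0 then 1 else 0)"
| "p0 d (Suc n) x =
     (if length x = d then
        (\<Sum>i<d. (p0 d n (x[i := x ! i - 1]) + p0 d n (x[i := x ! i + 1]))) / (2 * real d)
      else 0)"

text \<open>Box containing the support of p0 d k (all points within sup-distance k of 0).
  Sums over Z^d of functions supported in it are rendered as finite sums over this box.\<close>
definition box :: "nat \<Rightarrow> nat \<Rightarrow> int list set" where
  "box d k = {x. length x = d \<and> (\<forall>i<d. \<bar>x ! i\<bar> \<le> int k)}"

definition aN :: "nat \<Rightarrow> (nat \<Rightarrow> real) \<Rightarrow> nat \<Rightarrow> real" where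
  "aN d c N = (if d = 1 then ((c N)\<^sup>2 * sqrt (real N)) powr (-1/2)
               else ((c N)\<^sup>2 * ln (real N)) powr (-1/2))"

definition fk :: "nat \<Rightarrow> (nat \<Rightarrow> real) \<Rightarrow> (nat \<Rightarrow> int list \<Rightarrow> 'a \<Rightarrow> real) \<Rightarrow> nat \<Rightarrow> nat \<Rightarrow> 'a \<Rightarrow> real" where
  "fk d c h N k \<omega> = c N * (\<Sum>x\<in>box d k. h k x \<omega> * p0 d k x)"

end

theory Submission
  imports Defs
begin

text \<open>The normalised sum is \<open>\<Sum> b\<^sub>N p\<^sub>0(k,x) h(k,x)\<close> over \<open>1 \<le> k \<le> N\<close> and \<open>x\<close>, with
  \<open>b\<^sub>N = a\<^sub>N c\<^sub>N\<close>: a sum of independent random signs with deterministic weights. Its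
  characteristic function is \<open>\<Prod> cos (t b\<^sub>N p\<^sub>0(k,x))\<close>, which tends to \<open>exp (-t\<^sup>2 s / 2)\<close>
  as soon as the variance \<open>b\<^sub>N\<^sup>2 \<Sum> p\<^sub>0(k,x)\<^sup>2\<close> tends to some \<open>s > 0\<close> and the largest
  weight \<open>b\<^sub>N\<close> tends to 0.

  In dimension 1, \<open>\<Sum>\<^sub>x p\<^sub>0(k,x)\<^sup>2\<close> is the return probability
  \<open>r\<^sub>k = C(2k,k) / 4\<^sup>k\<close> (Vandermonde); in dimension 2 the rotation \<open>(x,y) \<mapsto> (x+y, x-y)\<close>
  splits the walk into two independent walks on \<open>\<int>\<close>, giving \<open>r\<^sub>k\<^sup>2\<close>. Wallis-type
  monotonicity yields \<open>k r\<^sub>k\<^sup>2 \<rightarrow> L > 0\<close>, hence \<open>r\<^sub>1 + \<dots> + r\<^sub>N \<sim> 2 \<surd>(L N)\<close> and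
  \<open>r\<^sub>1\<^sup>2 + \<dots> + r\<^sub>N\<^sup>2 \<sim> L ln N\<close>, which is exactly what \<open>a\<^sub>N\<close> normalises.\<close>

section \<open>Simple random walk on \<open>\<int>\<close> and \<open>\<int>\<^sup>2\<close>\<close>

fun srw :: "nat \<Rightarrow> int \<Rightarrow> real" where
  "srw 0 x = (if x = 0 then 1 else 0)"
| "srw (Suc n) x = (srw n (x - 1) + srw n (x + 1)) / 2"

lemma p0_one_dim: "p0 1 k [x] = srw k x"
  by (induction k arbitrary: x) auto

lemma p0_two_dim: "p0 2 k [x, y] = srw k (x + y) * srw k (x - y)"
proof (induction k arbitrary: x y)
  case 0
  then show ?case by (auto simp: numeral_2_eq_2)
next
  case (Suc n)
  have "p0 2 (Suc n) [x, y] =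
      (p0 2 n [x-1, y] + p0 2 n [x+1, y] + (p0 2 n [x, y-1] + p0 2 n [x, y+1])) / 4"
    by (simp add: numeral_2_eq_2 lessThan_Suc)
  also have "\<dots> = (srw n (x+y-1) + srw n (x+y+1)) * (srw n (x-y-1) + srw n (x-y+1)) / 4"
    unfolding Suc by (simp add: algebra_simps)
  finally show ?case by simp
qed

lemma p0_nonneg: "p0 d k x \<ge> 0"
  by (induction k arbitrary: x) (auto intro!: sum_nonneg divide_nonneg_nonneg add_nonneg_nonneg)

lemma p0_le_1: "p0 d k x \<le> 1"
proof (induction k arbitrary: x)
  case (Suc k)
  have "(\<Sum>i<d. p0 d k (x[i := x ! i - 1]) + p0 d k (x[i := x ! i + 1])) \<le> (\<Sum>i<d. 2)"
    using Suc.IH by (intro sum_mono) (metis add_mono one_add_one)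
  then show ?case
    by (cases "d = 0") (auto simp: divide_le_eq_1 intro: order_trans)
qed simp

lemma srw_support: "srw k x \<noteq> 0 \<Longrightarrow> \<bar>x\<bar> \<le> int k \<and> even (x + int k)"
proof (induction k arbitrary: x)
  case (Suc k)
  then have "srw k (x - 1) \<noteq> 0 \<or> srw k (x + 1) \<noteq> 0" by auto
  then show ?case using Suc.IH[of "x - 1"] Suc.IH[of "x + 1"] by auto
qed (auto split: if_splits)

lemma srw_support_image: "srw k x \<noteq> 0 \<Longrightarrow> x \<in> (\<lambda>j. 2 * int j - int k) ` {..k}"
proof -
  assume "srw k x \<noteq> 0"
  from srw_support[OF this] have x: "\<bar>x\<bar> \<le> int k" "even (x + int k)" by auto
  then obtain m where m: "x + int k = 2 * m" by (meson evenE)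
  with x have "x = 2 * int (nat m) - int k" "nat m \<in> {..k}" by auto
  then show ?thesis by blast
qed

lemma srw_binomial: "srw k (2 * int j - int k) = (k choose j) / 2 ^ k"
proof (induction k arbitrary: j)
  case (Suc k)
  show ?case
  proof (cases j)
    case 0
    have "srw k (- int k - 2) = 0" using srw_support[of k "- int k - 2"] by fastforce
    with 0 show ?thesis using Suc.IH[of 0] by (simp add: algebra_simps)
  next
    case (Suc j')
    have "srw (Suc k) (2 * int j - int (Suc k)) =
        (srw k (2 * int j' - int k) + srw k (2 * int (Suc j') - int k)) / 2"
      using Suc by (simp add: algebra_simps)
    also have "\<dots> = ((k choose j') + (k choose Suc j')) / 2 ^ Suc k"
      using Suc.IH[of j'] Suc.IH[of "Suc j'"] by (simp add: add_divide_distrib)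
    also have "\<dots> = (Suc k choose j) / 2 ^ Suc k"
      using Suc by (simp add: add.commute)
    finally show ?thesis .
  qed
qed simp

definition return_prob :: "nat \<Rightarrow> real" where
  "return_prob k = ((2 * k) choose k) / 4 ^ k"

lemma return_prob_pos: "return_prob k > 0"
  by (simp add: return_prob_def)

lemma sum_binomial_prob_sq: "(\<Sum>j\<le>k. (real (k choose j) / 2 ^ k)\<^sup>2) = return_prob k"
proof -
  have "((2::real) ^ k)\<^sup>2 = 4 ^ k"
    by (simp add: power2_eq_square flip: power_mult_distrib)
  then have "(\<Sum>j\<le>k. (real (k choose j) / 2 ^ k)\<^sup>2) = real (\<Sum>j\<le>k. (k choose j)\<^sup>2) / 4 ^ k"
    by (simp add: power_divide sum_divide_distrib)
  then show ?thesis
    by (simp only: choose_square_sum return_prob_def)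
qed

lemma sum_srw_sq: "(\<Sum>x\<in>{-int k..int k}. (srw k x)\<^sup>2) = return_prob k"
proof -
  let ?site = "\<lambda>j. 2 * int j - int k"
  have "(\<Sum>x\<in>{-int k..int k}. (srw k x)\<^sup>2) = (\<Sum>x\<in>?site ` {..k}. (srw k x)\<^sup>2)"
    by (rule sum.mono_neutral_right) (auto dest: srw_support_image)
  also have "\<dots> = (\<Sum>j\<le>k. (real (k choose j) / 2 ^ k)\<^sup>2)"
    by (subst sum.reindex) (auto simp: inj_on_def srw_binomial)
  finally show ?thesis
    by (simp only: sum_binomial_prob_sq)
qed

lemma sum_srw_rotated_sq:
  "(\<Sum>(x, y)\<in>{-int k..int k} \<times> {-int k..int k}. (srw k (x + y) * srw k (x - y))\<^sup>2)
     = (return_prob k)\<^sup>2"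
proof -
  let ?A = "{..k} \<times> {..k}"
  let ?F = "\<lambda>(x, y). (srw k (x + y) * srw k (x - y))\<^sup>2"
  define \<psi> where "\<psi> = (\<lambda>(i, j). (int i + int j - int k, int i - int j))"
  have support: "p \<in> \<psi> ` ?A" if "?F p \<noteq> 0" for p
  proof -
    obtain x y where p: "p = (x, y)" by force
    with that have "srw k (x + y) \<noteq> 0" "srw k (x - y) \<noteq> 0" by auto
    then obtain i j where "i \<le> k" "j \<le> k" "x + y = 2 * int i - int k" "x - y = 2 * int j - int k"
      by (blast dest: srw_support_image)
    then have "p = \<psi> (i, j)" "(i, j) \<in> ?A" by (auto simp: p \<psi>_def)
    then show ?thesis by blast
  qed
  have "(\<Sum>p\<in>{-int k..int k} \<times> {-int k..int k}. ?F p) = (\<Sum>p\<in>\<psi> ` ?A. ?F p)"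
    by (rule sum.mono_neutral_right) (use support in \<open>auto simp: \<psi>_def\<close>)
  also have "\<dots> = (\<Sum>(i, j)\<in>?A. (real (k choose i) / 2 ^ k)\<^sup>2 * (real (k choose j) / 2 ^ k)\<^sup>2)"
  proof (subst sum.reindex)
    show "inj_on \<psi> ?A" by (auto simp: inj_on_def \<psi>_def)
    have "?F (\<psi> (i, j)) = (real (k choose i) / 2 ^ k)\<^sup>2 * (real (k choose j) / 2 ^ k)\<^sup>2" for i j
      using srw_binomial[of k i] srw_binomial[of k j]
      by (simp add: \<psi>_def algebra_simps power_mult_distrib)
    then show "sum (?F \<circ> \<psi>) ?A = (\<Sum>(i, j)\<in>?A. (real (k choose i) / 2 ^ k)\<^sup>2 * (real (k choose j) / 2 ^ k)\<^sup>2)"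
      by (auto intro!: sum.cong)
  qed
  also have "\<dots> = (return_prob k)\<^sup>2"
    by (simp add: sum_product sum.cartesian_product power2_eq_square flip: sum_binomial_prob_sq)
  finally show ?thesis .
qed

section \<open>Asymptotics of the return probability\<close>

lemma return_prob_0: "return_prob 0 = 1"
  by (simp add: return_prob_def)

lemma return_prob_Suc: "return_prob (Suc k) = return_prob k * ((2 * real k + 1) / (2 * real k + 2))"
proof -
  have central: "real ((2 * n) choose n) = fact (2 * n) / (fact n)\<^sup>2" for n
    by (simp add: binomial_fact power2_eq_square)
  have f1: "fact (2 * Suc k) = (2 * k + 2) * (2 * k + 1) * (fact (2 * k) :: real)"
    by (simp add: fact_Suc algebra_simps)
  have f2: "(fact (Suc k))\<^sup>2 = (k + 1)\<^sup>2 * (fact k :: real)\<^sup>2"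
    by (simp add: power_mult_distrib)
  have "return_prob (Suc k)
      = return_prob k * ((2 * real k + 2) * (2 * real k + 1) / (4 * (real k + 1)\<^sup>2))"
    unfolding return_prob_def central f1 f2 power_Suc by (simp add: field_simps)
  also have "4 * (real k + 1)\<^sup>2 = (2 * real k + 2) * (2 * real k + 2)"
    by (simp add: power2_eq_square algebra_simps)
  finally show ?thesis by simp
qed

lemma sum_return_prob: "(\<Sum>k=1..N. return_prob k) = (2 * real N + 1) * return_prob N - 1"
proof (induction N)
  case (Suc N)
  have "(\<Sum>k=1..Suc N. return_prob k) = (2 * real N + 1) * return_prob N - 1 + return_prob (Suc N)"
    using Suc by simp
  also have "\<dots> = (2 * real (Suc N) + 1) * return_prob (Suc N) - 1"
    by (simp add: return_prob_Suc field_simps)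
  finally show ?case .
qed (simp add: return_prob_0)

lemma incseq_return_prob_sq: "incseq (\<lambda>k. real k * (return_prob k)\<^sup>2)"
proof (rule incseq_SucI)
  fix k
  define x where "x = real k"
  have "x * (2 * x + 2)\<^sup>2 \<le> (x + 1) * (2 * x + 1)\<^sup>2"
    by (simp add: x_def power2_eq_square algebra_simps)
  then have ratio: "x \<le> (x + 1) * ((2 * x + 1) / (2 * x + 2))\<^sup>2"
    by (simp add: x_def power_divide pos_le_divide_eq)
  have "x * (return_prob k)\<^sup>2 \<le> (x + 1) * ((2 * x + 1) / (2 * x + 2))\<^sup>2 * (return_prob k)\<^sup>2"
    using ratio by (rule mult_right_mono) simp
  also have "\<dots> = real (Suc k) * (return_prob (Suc k))\<^sup>2"
    by (simp only: x_def of_nat_Suc return_prob_Suc power_mult_distrib) (simp add: ac_simps)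
  finally show "real k * (return_prob k)\<^sup>2 \<le> real (Suc k) * (return_prob (Suc k))\<^sup>2"
    unfolding x_def .
qed

lemma decseq_return_prob_sq: "decseq (\<lambda>k. (real k + 1/2) * (return_prob k)\<^sup>2)"
proof (rule decseq_SucI)
  fix k
  define x where "x = real k"
  have "(x + 1 + 1/2) * (2 * x + 1)\<^sup>2 \<le> (x + 1/2) * (2 * x + 2)\<^sup>2"
    by (simp add: x_def power2_eq_square algebra_simps)
  then have ratio: "(x + 1 + 1/2) * ((2 * x + 1) / (2 * x + 2))\<^sup>2 \<le> x + 1/2"
    by (simp add: x_def power_divide pos_divide_le_eq)
  have "(real (Suc k) + 1/2) * (return_prob (Suc k))\<^sup>2
      = (x + 1 + 1/2) * ((2 * x + 1) / (2 * x + 2))\<^sup>2 * (return_prob k)\<^sup>2"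
    by (simp only: x_def of_nat_Suc return_prob_Suc power_mult_distrib) (simp add: ac_simps)
  also have "\<dots> \<le> (x + 1/2) * (return_prob k)\<^sup>2"
    using ratio by (rule mult_right_mono) simp
  finally show "(real (Suc k) + 1/2) * (return_prob (Suc k))\<^sup>2 \<le> (real k + 1/2) * (return_prob k)\<^sup>2"
    unfolding x_def .
qed

text \<open>By Wallis' product this limit is \<open>1/\<pi>\<close>; only its positivity is needed.\<close>
definition wallis_const :: real where
  "wallis_const = lim (\<lambda>k. real k * (return_prob k)\<^sup>2)"

lemma return_prob_sq_le_wallis_upper: "real k * (return_prob k)\<^sup>2 \<le> (real m + 1/2) * (return_prob m)\<^sup>2"
proof -
  have "real k * (return_prob k)\<^sup>2 \<le> (real (max k m) + 1/2) * (return_prob (max k m))\<^sup>2"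
    using incseq_return_prob_sq[unfolded incseq_def, rule_format, of k "max k m"]
    by (simp add: mult_right_mono order_trans)
  also have "\<dots> \<le> (real m + 1/2) * (return_prob m)\<^sup>2"
    using decseq_return_prob_sq[unfolded decseq_def] by simp
  finally show ?thesis .
qed

lemma return_prob_sq_tendsto_wallis: "(\<lambda>k. real k * (return_prob k)\<^sup>2) \<longlonglongrightarrow> wallis_const"
proof -
  have "\<forall>k. real k * (return_prob k)\<^sup>2 \<le> 1/2"
    using return_prob_sq_le_wallis_upper[of _ 0] by (simp add: return_prob_0)
  then obtain L where "(\<lambda>k. real k * (return_prob k)\<^sup>2) \<longlonglongrightarrow> L"
    by (rule incseq_convergent[OF incseq_return_prob_sq])
  then have "convergent (\<lambda>k. real k * (return_prob k)\<^sup>2)"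
    by (auto simp: convergent_def)
  then show ?thesis
    by (simp add: wallis_const_def convergent_LIMSEQ_iff)
qed

lemma wallis_const_bounds:
  "real k * (return_prob k)\<^sup>2 \<le> wallis_const" "wallis_const \<le> (real k + 1/2) * (return_prob k)\<^sup>2"
  using incseq_le[OF incseq_return_prob_sq return_prob_sq_tendsto_wallis]
    LIMSEQ_le_const2[OF return_prob_sq_tendsto_wallis] return_prob_sq_le_wallis_upper
  by auto

lemma wallis_const_pos: "wallis_const > 0"
proof -
  have "0 < (return_prob 1)\<^sup>2" using return_prob_pos[of 1] by simp
  also have "\<dots> \<le> wallis_const" using wallis_const_bounds(1)[of 1] by simp
  finally show ?thesis .
qed

lemma inverse_sqrt_tendsto_0: "(\<lambda>N. 1 / sqrt (real N)) \<longlonglongrightarrow> 0"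
  using tendsto_real_sqrt[OF lim_const_over_n[of 1]] by (simp add: real_sqrt_divide)

lemma sum_return_prob_asymp:
  "(\<lambda>N. (\<Sum>k=1..N. return_prob k) / sqrt (real N)) \<longlonglongrightarrow> 2 * sqrt wallis_const"
proof -
  have eq: "(2 + 1 / real N) * sqrt (real N * (return_prob N)\<^sup>2) - 1 / sqrt (real N)
      = (\<Sum>k=1..N. return_prob k) / sqrt (real N)" if "N \<ge> 1" for N
  proof -
    define s where "s = sqrt (real N)"
    have s: "s > 0" "real N = s\<^sup>2" using that by (simp_all add: s_def)
    have "sqrt (real N * (return_prob N)\<^sup>2) = s * return_prob N"
      using return_prob_pos[of N] by (simp add: s_def real_sqrt_mult)
    then show ?thesis
      unfolding sum_return_prob s_def[symmetric] s(2) using s(1)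
      by (simp add: field_simps power2_eq_square)
  qed
  have "(\<lambda>N. (2 + 1 / real N) * sqrt (real N * (return_prob N)\<^sup>2) - 1 / sqrt (real N))
      \<longlonglongrightarrow> (2 + 0) * sqrt wallis_const - 0"
    by (intro tendsto_intros lim_const_over_n inverse_sqrt_tendsto_0 return_prob_sq_tendsto_wallis)
  then show ?thesis
    using tendsto_cong[OF eventually_sequentiallyI[of 1, OF eq]] by simp
qed

lemma sum_return_prob_sq_lower:
  "wallis_const * (ln (real N) - 1) \<le> (\<Sum>k=1..N. (return_prob k)\<^sup>2)"
proof -
  have harm_shift: "(\<Sum>k=1..n. 1 / (real k + 1)) = harm (Suc n) - 1" for n
    by (induction n) (simp_all add: harm_Suc inverse_eq_divide harm_def)
  have "ln (real N) \<le> ln (real (Suc N) + 1)"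
    by (cases "N = 0") simp_all
  also have "\<dots> \<le> harm (Suc N)" by (rule ln_le_harm)
  finally have "wallis_const * (ln (real N) - 1) \<le> wallis_const * (harm (Suc N) - 1)"
    using wallis_const_pos by simp
  also have "\<dots> = (\<Sum>k=1..N. wallis_const / (real k + 1))"
    by (simp add: harm_shift[symmetric] sum_distrib_left)
  also have "\<dots> \<le> (\<Sum>k=1..N. (return_prob k)\<^sup>2)"
  proof (intro sum_mono)
    fix k
    have "wallis_const \<le> (real k + 1) * (return_prob k)\<^sup>2"
      using wallis_const_bounds(2)[of k] mult_right_mono[of "real k + 1/2" "real k + 1" "(return_prob k)\<^sup>2"]
      by simp
    then show "wallis_const / (real k + 1) \<le> (return_prob k)\<^sup>2"
      by (simp add: divide_le_eq mult.commute)
  qed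
  finally show ?thesis .
qed

lemma sum_return_prob_sq_upper:
  assumes "N \<ge> 1"
  shows "(\<Sum>k=1..N. (return_prob k)\<^sup>2) \<le> wallis_const * (ln (real N) + 1)"
proof -
  have "(\<Sum>k=1..N. (return_prob k)\<^sup>2) \<le> (\<Sum>k=1..N. wallis_const / real k)"
    using wallis_const_bounds(1) by (intro sum_mono) (simp add: field_simps)
  also have "\<dots> = wallis_const * harm N"
    by (simp add: harm_def sum_distrib_left divide_inverse)
  also have "\<dots> \<le> wallis_const * (ln (real N) + 1)"
    using euler_mascheroni_sequence_decreasing[of 1 N] assms wallis_const_pos
    by (simp add: harm_def)
  finally show ?thesis .
qed

lemma inverse_ln_tendsto_0: "(\<lambda>N. 1 / ln (real N)) \<longlonglongrightarrow> 0"
  using tendsto_inverse_0_at_top[OF filterlim_compose[OF ln_at_top filterlim_real_sequentially]]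
  by (simp add: inverse_eq_divide)

lemma sum_return_prob_sq_asymp:
  "(\<lambda>N. (\<Sum>k=1..N. (return_prob k)\<^sup>2) / ln (real N)) \<longlonglongrightarrow> wallis_const"
proof (rule real_tendsto_sandwich)
  let ?L = wallis_const
  show "(\<lambda>N. ?L - ?L * (1 / ln (real N))) \<longlonglongrightarrow> ?L"
    using tendsto_diff[OF tendsto_const tendsto_mult_right_zero[OF inverse_ln_tendsto_0]] by simp
  show "(\<lambda>N. ?L + ?L * (1 / ln (real N))) \<longlonglongrightarrow> ?L"
    using tendsto_add[OF tendsto_const tendsto_mult_right_zero[OF inverse_ln_tendsto_0]] by simp
  have ln_pos: "ln (real N) > 0" if "N \<ge> 2" for N
    using that by simp
  show "\<forall>\<^sub>F N in sequentially. ?L - ?L * (1 / ln (real N)) \<le> (\<Sum>k=1..N. (return_prob k)\<^sup>2) / ln (real N)"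
  proof (intro eventually_sequentiallyI[of 2])
    fix N :: nat
    assume "N \<ge> 2"
    then have "?L - ?L * (1 / ln (real N)) = ?L * (ln (real N) - 1) / ln (real N)"
      using ln_pos by (simp add: field_simps)
    then show "?L - ?L * (1 / ln (real N)) \<le> (\<Sum>k=1..N. (return_prob k)\<^sup>2) / ln (real N)"
      using divide_right_mono[OF sum_return_prob_sq_lower] ln_pos \<open>N \<ge> 2\<close> by simp
  qed
  show "\<forall>\<^sub>F N in sequentially. (\<Sum>k=1..N. (return_prob k)\<^sup>2) / ln (real N) \<le> ?L + ?L * (1 / ln (real N))"
    using ln_pos sum_return_prob_sq_upper
    by (intro eventually_sequentiallyI[of 2]) (simp add: field_simps)
qed

section \<open>A central limit theorem for weighted Rademacher sums\<close>

lemma abs_prod_diff_le_sum: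
  fixes a b :: "'i \<Rightarrow> real"
  assumes "finite I" "\<And>i. i \<in> I \<Longrightarrow> \<bar>a i\<bar> \<le> 1" "\<And>i. i \<in> I \<Longrightarrow> \<bar>b i\<bar> \<le> 1"
  shows "\<bar>(\<Prod>i\<in>I. a i) - (\<Prod>i\<in>I. b i)\<bar> \<le> (\<Sum>i\<in>I. \<bar>a i - b i\<bar>)"
  using assms
proof (induction I rule: finite_induct)
  case (insert x F)
  have prod_b: "\<bar>\<Prod>i\<in>F. b i\<bar> \<le> 1"
    using insert.prems by (simp add: abs_prod prod_le_1)
  have "(\<Prod>i\<in>insert x F. a i) - (\<Prod>i\<in>insert x F. b i)
      = a x * ((\<Prod>i\<in>F. a i) - (\<Prod>i\<in>F. b i)) + (a x - b x) * (\<Prod>i\<in>F. b i)"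
    using insert.hyps by (simp add: algebra_simps)
  then have "\<bar>(\<Prod>i\<in>insert x F. a i) - (\<Prod>i\<in>insert x F. b i)\<bar>
      \<le> \<bar>a x\<bar> * \<bar>(\<Prod>i\<in>F. a i) - (\<Prod>i\<in>F. b i)\<bar> + \<bar>a x - b x\<bar> * \<bar>\<Prod>i\<in>F. b i\<bar>"
    by (metis abs_mult abs_triangle_ineq)
  also have "\<dots> \<le> 1 * \<bar>(\<Prod>i\<in>F. a i) - (\<Prod>i\<in>F. b i)\<bar> + \<bar>a x - b x\<bar> * 1"
    using insert.prems prod_b by (intro add_mono mult_mono) auto
  also have "\<dots> \<le> (\<Sum>i\<in>insert x F. \<bar>a i - b i\<bar>)"
    using insert by simp
  finally show ?case .
qed simp

lemma abs_cos_minus_taylor: "\<bar>cos (y::real) - (1 - y\<^sup>2 / 2)\<bar> \<le> y ^ 4 / 24"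
proof -
  let ?R = "iexp y - (\<Sum>k\<le>3. (\<i> * y) ^ k / fact k)"
  have "cmod ?R \<le> \<bar>y\<bar> ^ 4 / fact 4"
    using iexp_approx1[of y 3] by (simp add: numeral_eq_Suc)
  moreover have "Re ?R = cos y - (1 - y\<^sup>2 / 2)"
    by (simp add: numeral_eq_Suc Re_exp power2_eq_square fact_numeral)
  ultimately show ?thesis
    using abs_Re_le_cmod[of ?R] by (simp add: power_abs fact_numeral)
qed

lemma abs_exp_minus_linear: "(v::real) \<ge> 0 \<Longrightarrow> \<bar>exp (- v) - (1 - v)\<bar> \<le> v\<^sup>2 / 2"
proof -
  assume v: "v \<ge> 0"
  have pos: "1 + v + v\<^sup>2 / 2 > 0" using v by (simp add: add_pos_nonneg)
  have "exp (- v) = 1 / exp v" by (simp add: exp_minus inverse_eq_divide)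
  also have "\<dots> \<le> 1 / (1 + v + v\<^sup>2 / 2)"
    using exp_lower_Taylor_quadratic[OF v] pos by (intro divide_left_mono) auto
  also have "\<dots> \<le> 1 - v + v\<^sup>2 / 2"
  proof -
    have "(1 - v + v\<^sup>2 / 2) * (1 + v + v\<^sup>2 / 2) = 1 + v ^ 4 / 4"
      by (simp add: algebra_simps power2_eq_square power4_eq_xxxx)
    then show ?thesis using pos by (simp add: divide_le_eq)
  qed
  finally show ?thesis using exp_ge_add_one_self[of "- v"] by simp
qed

lemma abs_cos_minus_gauss: "\<bar>cos (y::real) - exp (- (y\<^sup>2 / 2))\<bar> \<le> y ^ 4"
proof -
  have "\<bar>exp (- (y\<^sup>2 / 2)) - (1 - y\<^sup>2 / 2)\<bar> \<le> (y\<^sup>2 / 2)\<^sup>2 / 2"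
    by (rule abs_exp_minus_linear) simp
  also have "\<dots> = y ^ 4 / 8" by (simp add: power2_eq_square power4_eq_xxxx)
  finally have "\<bar>exp (- (y\<^sup>2 / 2)) - (1 - y\<^sup>2 / 2)\<bar> \<le> y ^ 4 / 8" .
  moreover have "y ^ 4 \<ge> 0" by simp
  ultimately show ?thesis using abs_cos_minus_taylor[of y] by linarith
qed

lemma abs_prod_cos_minus_gauss_le:
  fixes u :: "'i \<Rightarrow> real"
  assumes fin: "finite I" and small: "\<And>i. i \<in> I \<Longrightarrow> (u i)\<^sup>2 \<le> \<beta>"
  shows "\<bar>(\<Prod>i\<in>I. cos (t * u i)) - exp (- (t\<^sup>2 * (\<Sum>i\<in>I. (u i)\<^sup>2) / 2))\<bar>
           \<le> t ^ 4 * \<beta> * (\<Sum>i\<in>I. (u i)\<^sup>2)"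
proof -
  have "(\<Sum>i\<in>I. - ((t * u i)\<^sup>2 / 2)) = - (t\<^sup>2 * (\<Sum>i\<in>I. (u i)\<^sup>2) / 2)"
    by (simp add: sum_negf power_mult_distrib sum_distrib_left sum_divide_distrib)
  then have gauss: "exp (- (t\<^sup>2 * (\<Sum>i\<in>I. (u i)\<^sup>2) / 2)) = (\<Prod>i\<in>I. exp (- ((t * u i)\<^sup>2 / 2)))"
    using exp_sum[OF fin, of "\<lambda>i. - ((t * u i)\<^sup>2 / 2)"] by simp
  have "\<bar>(\<Prod>i\<in>I. cos (t * u i)) - (\<Prod>i\<in>I. exp (- ((t * u i)\<^sup>2 / 2)))\<bar>
      \<le> (\<Sum>i\<in>I. \<bar>cos (t * u i) - exp (- ((t * u i)\<^sup>2 / 2))\<bar>)"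
    by (rule abs_prod_diff_le_sum[OF fin]) auto
  also have "\<dots> \<le> (\<Sum>i\<in>I. t ^ 4 * ((u i)\<^sup>2 * (u i)\<^sup>2))"
  proof (rule sum_mono)
    fix i
    have pow: "(t * u i) ^ 4 = t ^ 4 * ((u i)\<^sup>2 * (u i)\<^sup>2)"
      by (simp add: power_mult_distrib power4_eq_xxxx power2_eq_square)
    show "\<bar>cos (t * u i) - exp (- ((t * u i)\<^sup>2 / 2))\<bar> \<le> t ^ 4 * ((u i)\<^sup>2 * (u i)\<^sup>2)"
      unfolding pow[symmetric] by (rule abs_cos_minus_gauss)
  qed
  also have "\<dots> \<le> (\<Sum>i\<in>I. t ^ 4 * (\<beta> * (u i)\<^sup>2))"
  proof (rule sum_mono)
    fix i
    assume "i \<in> I"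
    then have "(u i)\<^sup>2 * (u i)\<^sup>2 \<le> \<beta> * (u i)\<^sup>2"
      by (intro mult_right_mono small) simp_all
    then show "t ^ 4 * ((u i)\<^sup>2 * (u i)\<^sup>2) \<le> t ^ 4 * (\<beta> * (u i)\<^sup>2)"
      by (rule mult_left_mono) simp
  qed
  also have "\<dots> = t ^ 4 * \<beta> * (\<Sum>i\<in>I. (u i)\<^sup>2)"
    by (simp add: sum_distrib_left mult.assoc)
  finally show ?thesis
    unfolding gauss .
qed

lemma prod_cos_tendsto_gauss:
  fixes I :: "nat \<Rightarrow> 'i set" and u :: "nat \<Rightarrow> 'i \<Rightarrow> real"
  assumes fin: "\<And>N. finite (I N)"
    and var: "(\<lambda>N. \<Sum>i\<in>I N. (u N i)\<^sup>2) \<longlonglongrightarrow> s"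
    and small: "\<And>N i. i \<in> I N \<Longrightarrow> (u N i)\<^sup>2 \<le> \<beta> N" "\<beta> \<longlonglongrightarrow> 0"
  shows "(\<lambda>N. \<Prod>i\<in>I N. cos (t * u N i)) \<longlonglongrightarrow> exp (- (t\<^sup>2 * s / 2))"
proof -
  define V where "V N = (\<Sum>i\<in>I N. (u N i)\<^sup>2)" for N
  have gauss: "(\<lambda>N. exp (- (t\<^sup>2 * V N / 2))) \<longlonglongrightarrow> exp (- (t\<^sup>2 * s / 2))"
    unfolding V_def by (intro tendsto_intros var) simp
  have err: "\<forall>N. norm ((\<Prod>i\<in>I N. cos (t * u N i)) - exp (- (t\<^sup>2 * V N / 2))) \<le> t ^ 4 * \<beta> N * V N"
  proof
    fix N
    show "norm ((\<Prod>i\<in>I N. cos (t * u N i)) - exp (- (t\<^sup>2 * V N / 2))) \<le> t ^ 4 * \<beta> N * V N"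
      unfolding V_def real_norm_def by (rule abs_prod_cos_minus_gauss_le[OF fin small(1)])
  qed
  have "(\<lambda>N. t ^ 4 * \<beta> N * V N) \<longlonglongrightarrow> t ^ 4 * 0 * s"
    unfolding V_def by (intro tendsto_intros small var)
  then have "(\<lambda>N. (\<Prod>i\<in>I N. cos (t * u N i)) - exp (- (t\<^sup>2 * V N / 2))) \<longlonglongrightarrow> 0"
    by (intro Lim_null_comparison[OF always_eventually[OF err]]) simp
  from tendsto_add[OF this gauss] show ?thesis by simp
qed

lemma char_normal_density_0:
  assumes "\<sigma> > 0"
  shows "char (density lborel (normal_density 0 \<sigma>)) t = exp (- ((\<sigma> * t)\<^sup>2) / 2)"
proof -
  interpret std: prob_space std_normal_distribution
    using prob_space_normal_density by simp
  have "distributed std_normal_distribution lborel (\<lambda>x. x) std_normal_density"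
    by (simp add: distributed_def distr_id2)
  then have "distributed std_normal_distribution lborel (\<lambda>x. 0 + \<sigma> * x)
      (normal_density (0 + \<sigma> * 0) (\<bar>\<sigma>\<bar> * 1))"
    by (rule std.normal_density_affine) (use assms in auto)
  then have as_distr: "density lborel (normal_density 0 \<sigma>) = distr std_normal_distribution lborel (\<lambda>x. \<sigma> * x)"
    using assms by (simp add: distributed_def)
  have "char (density lborel (normal_density 0 \<sigma>)) t = (CLINT x|std_normal_distribution. iexp (t * (\<sigma> * x)))"
    unfolding as_distr char_def by (subst integral_distr) auto
  also have "\<dots> = char std_normal_distribution (\<sigma> * t)"
    unfolding char_def by (simp add: ac_simps)
  finally show ?thesis
    by (simp add: char_std_normal_distribution)
qed

lemma (in prob_space) char_distr_scaled_rademacher: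
  assumes X: "random_variable borel X"
    and pm: "AE \<omega> in M. X \<omega> \<in> {-1, 1}"
    and half: "prob {\<omega> \<in> space M. X \<omega> = 1} = 1/2"
  shows "char (distr M borel (\<lambda>\<omega>. a * X \<omega>)) t = cos (t * a)"
proof -
  let ?A = "{\<omega> \<in> space M. X \<omega> = 1}"
  have A: "?A \<in> events" using X by measurable
  have X_ind: "AE \<omega> in M. X \<omega> = 2 * indicator ?A \<omega> - 1"
    using pm AE_space by eventually_elim (auto simp: indicator_def)
  have int_ind: "integrable M (\<lambda>\<omega>. 2 * indicator ?A \<omega> - 1 :: real)"
    using A by (auto simp: emeasure_eq_measure)
  have int_X: "integrable M X"
    using integrable_cong_AE_imp[OF int_ind X AE_symmetric[OF X_ind]] .
  have EX: "expectation X = 0"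
  proof -
    have "expectation X = expectation (\<lambda>\<omega>. 2 * indicator ?A \<omega> - 1 :: real)"
      by (rule integral_cong_AE[OF X _ X_ind]) (use A in auto)
    also have "\<dots> = 2 * prob ?A - 1"
      using A int_ind by (simp add: prob_space emeasure_eq_measure)
    finally show ?thesis using half by simp
  qed
  have iexp_AE: "AE \<omega> in M. iexp (t * (a * X \<omega>)) = cos (t * a) + \<i> * (sin (t * a) * X \<omega>)"
    using pm by eventually_elim (auto simp: exp_Euler cos_of_real sin_of_real simp flip: of_real_mult)
  have "char (distr M borel (\<lambda>\<omega>. a * X \<omega>)) t = (CLINT \<omega>|M. iexp (t * (a * X \<omega>)))"
    unfolding char_def using X by (subst integral_distr) auto
  also have "\<dots> = (CLINT \<omega>|M. cos (t * a) + \<i> * (sin (t * a) * X \<omega>))"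
    by (rule integral_cong_AE[OF _ _ iexp_AE]) (use X in auto)
  also have "\<dots> = cos (t * a) + \<i> * (sin (t * a) * expectation X)"
    using int_X by (simp add: prob_space)
  finally show ?thesis using EX by simp
qed

lemma (in prob_space) char_distr_weighted_rademacher_sum:
  fixes X :: "'i \<Rightarrow> 'a \<Rightarrow> real"
  assumes indep: "indep_vars (\<lambda>_. borel) X J"
    and pm: "\<And>i. i \<in> J \<Longrightarrow> AE \<omega> in M. X i \<omega> \<in> {-1, 1}"
    and half: "\<And>i. i \<in> J \<Longrightarrow> prob {\<omega> \<in> space M. X i \<omega> = 1} = 1/2"
    and I: "finite I" "I \<subseteq> J"
  shows "char (distr M borel (\<lambda>\<omega>. \<Sum>i\<in>I. u i * X i \<omega>)) t = (\<Prod>i\<in>I. cos (t * u i))"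
proof -
  have "char (distr M borel (\<lambda>\<omega>. \<Sum>i\<in>I. u i * X i \<omega>)) t
      = (\<Prod>i\<in>I. char (distr M borel (\<lambda>\<omega>. u i * X i \<omega>)) t)"
    using indep_vars_compose2[OF indep_vars_subset[OF indep I(2)], where Y = "\<lambda>i x. u i * x"]
    by (intro char_distr_sum) auto
  also have "\<dots> = (\<Prod>i\<in>I. complex_of_real (cos (t * u i)))"
  proof (rule prod.cong[OF refl])
    fix i
    assume "i \<in> I"
    with I(2) have "i \<in> J" by blast
    moreover from this have "random_variable borel (X i)"
      using indep by (simp add: indep_vars_def2)
    ultimately show "char (distr M borel (\<lambda>\<omega>. u i * X i \<omega>)) t = cos (t * u i)"
      by (intro char_distr_scaled_rademacher pm half)
  qed
  finally show ?thesis by simp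
qed

lemma (in prob_space) weak_conv_weighted_rademacher_sum:
  fixes X :: "'i \<Rightarrow> 'a \<Rightarrow> real" and u :: "nat \<Rightarrow> 'i \<Rightarrow> real"
  assumes indep: "indep_vars (\<lambda>_. borel) X J"
    and pm: "\<And>i. i \<in> J \<Longrightarrow> AE \<omega> in M. X i \<omega> \<in> {-1, 1}"
    and half: "\<And>i. i \<in> J \<Longrightarrow> prob {\<omega> \<in> space M. X i \<omega> = 1} = 1/2"
    and I: "\<And>N. finite (I N)" "\<And>N. I N \<subseteq> J"
    and var: "(\<lambda>N. \<Sum>i\<in>I N. (u N i)\<^sup>2) \<longlonglongrightarrow> s" "s > 0"
    and small: "\<And>N i. i \<in> I N \<Longrightarrow> (u N i)\<^sup>2 \<le> \<beta> N" "\<beta> \<longlonglongrightarrow> 0"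
  shows "weak_conv_m (\<lambda>N. distr M borel (\<lambda>\<omega>. \<Sum>i\<in>I N. u N i * X i \<omega>))
           (density lborel (normal_density 0 (sqrt s)))"
proof (rule levy_continuity)
  have "random_variable borel (X i)" if "i \<in> J" for i
    using indep that by (simp add: indep_vars_def2)
  then show "real_distribution (distr M borel (\<lambda>\<omega>. \<Sum>i\<in>I N. u N i * X i \<omega>))" for N
    using I(2) by (simp add: subset_iff)
  show "real_distribution (density lborel (normal_density 0 (sqrt s)))"
    using prob_space_normal_density var(2)
    by (simp add: real_distribution_def real_distribution_axioms_def)
  fix t
  have char_eq: "char (distr M borel (\<lambda>\<omega>. \<Sum>i\<in>I N. u N i * X i \<omega>)) t = (\<Prod>i\<in>I N. cos (t * u N i))" for N
    by (rule char_distr_weighted_rademacher_sum[OF indep pm half I(1) I(2)])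
  have "(\<lambda>N. \<Prod>i\<in>I N. cos (t * u N i)) \<longlonglongrightarrow> exp (- ((sqrt s * t)\<^sup>2) / 2)"
    using prod_cos_tendsto_gauss[OF I(1) var(1) small] var(2)
    by (simp add: power_mult_distrib ac_simps)
  then show "(\<lambda>N. char (distr M borel (\<lambda>\<omega>. \<Sum>i\<in>I N. u N i * X i \<omega>)) t)
      \<longlonglongrightarrow> char (density lborel (normal_density 0 (sqrt s))) t"
    unfolding char_eq char_normal_density_0[OF real_sqrt_gt_zero[OF var(2)]]
    by (rule tendsto_of_real)
qed

section \<open>The normalised variance\<close>

lemma finite_box: "finite (box d k)"
proof (rule finite_subset)
  show "box d k \<subseteq> {xs. set xs \<subseteq> {-int k..int k} \<and> length xs = d}"
    by (force simp: box_def in_set_conv_nth abs_le_iff)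
qed (simp add: finite_lists_length_eq)

lemma box_one_eq: "box 1 k = (\<lambda>y. [y]) ` {-int k..int k}"
  by (auto simp: box_def length_Suc_conv image_iff abs_le_iff)

lemma box_two_eq: "box 2 k = (\<lambda>(y, z). [y, z]) ` ({-int k..int k} \<times> {-int k..int k})"
proof
  show "box 2 k \<subseteq> (\<lambda>(y, z). [y, z]) ` ({-int k..int k} \<times> {-int k..int k})"
  proof
    fix x
    assume x: "x \<in> box 2 k"
    then obtain y z where xyz: "x = [y, z]"
      by (auto simp: box_def length_Suc_conv numeral_2_eq_2)
    with x have "\<bar>y\<bar> \<le> int k" "\<bar>z\<bar> \<le> int k"
      by (auto simp: box_def dest: spec[of _ 0] spec[of _ 1])
    with xyz show "x \<in> (\<lambda>(y, z). [y, z]) ` ({-int k..int k} \<times> {-int k..int k})"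
      by force
  qed
qed (auto simp: box_def less_Suc_eq numeral_2_eq_2)

lemma sum_p0_sq_box_one: "(\<Sum>x\<in>box 1 k. (p0 1 k x)\<^sup>2) = return_prob k"
proof -
  have "(\<Sum>x\<in>box 1 k. (p0 1 k x)\<^sup>2) = (\<Sum>y\<in>{-int k..int k}. (p0 1 k [y])\<^sup>2)"
    unfolding box_one_eq by (rule sum.reindex_cong[where l = "\<lambda>y. [y]"]) (auto simp: inj_on_def)
  then show ?thesis
    by (simp only: p0_one_dim sum_srw_sq)
qed

lemma sum_p0_sq_box_two: "(\<Sum>x\<in>box 2 k. (p0 2 k x)\<^sup>2) = (return_prob k)\<^sup>2"
proof -
  have "(\<Sum>x\<in>box 2 k. (p0 2 k x)\<^sup>2)
      = (\<Sum>(y, z)\<in>{-int k..int k} \<times> {-int k..int k}. (p0 2 k [y, z])\<^sup>2)"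
    unfolding box_two_eq
    by (rule sum.reindex_cong[where l = "\<lambda>(y, z). [y, z]"]) (auto simp: inj_on_def)
  then show ?thesis
    by (simp add: p0_two_dim sum_srw_rotated_sq)
qed

lemma sq_mult_powr_neg_half:
  fixes c X :: real
  assumes "c \<noteq> 0" "X > 0"
  shows "(c * (c\<^sup>2 * X) powr (-1/2))\<^sup>2 = 1 / X"
proof -
  have "((c\<^sup>2 * X) powr (-1/2))\<^sup>2 = (c\<^sup>2 * X) powr (-1/2 + -1/2)"
    by (simp only: power2_eq_square powr_add[symmetric])
  also have "\<dots> = 1 / (c\<^sup>2 * X)"
    using assms by (simp add: powr_minus_divide)
  finally show ?thesis
    using assms by (simp add: power_mult_distrib)
qed

lemma aN_mult_sq_one_dim: "c N \<noteq> 0 \<Longrightarrow> N \<ge> 1 \<Longrightarrow> (aN 1 c N * c N)\<^sup>2 = 1 / sqrt (real N)"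
  using sq_mult_powr_neg_half[of "c N" "sqrt (real N)"] by (simp add: aN_def mult.commute)

lemma aN_mult_sq_two_dim: "c N \<noteq> 0 \<Longrightarrow> N \<ge> 2 \<Longrightarrow> (aN 2 c N * c N)\<^sup>2 = 1 / ln (real N)"
  using sq_mult_powr_neg_half[of "c N" "ln (real N)"] by (simp add: aN_def mult.commute)

lemma sum_aN_fk_eq:
  "(\<Sum>k=1..N. aN d c N * fk d c h N k \<omega>)
     = (\<Sum>i\<in>Sigma {1..N} (box d). aN d c N * c N * p0 d (fst i) (snd i) * h (fst i) (snd i) \<omega>)"
  unfolding fk_def sum_distrib_left
  by (subst sum.Sigma) (auto simp: finite_box ac_simps split_beta)

lemma sum_Sigma_box_sq:
  "(\<Sum>i\<in>Sigma {1..N} (box d). (b * p0 d (fst i) (snd i))\<^sup>2)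
     = b\<^sup>2 * (\<Sum>k=1..N. \<Sum>x\<in>box d k. (p0 d k x)\<^sup>2)"
  by (simp add: sum.Sigma finite_box sum_distrib_left power_mult_distrib split_beta)

lemma normalised_variance_tendsto:
  assumes d: "d \<in> {1, 2}" and c: "\<And>N. c N \<noteq> 0"
  obtains s where "s > 0"
    "(\<lambda>N. \<Sum>i\<in>Sigma {1..N} (box d). (aN d c N * c N * p0 d (fst i) (snd i))\<^sup>2) \<longlonglongrightarrow> s"
    "(\<lambda>N. (aN d c N * c N)\<^sup>2) \<longlonglongrightarrow> 0"
proof -
  let ?var = "\<lambda>N. \<Sum>i\<in>Sigma {1..N} (box d). (aN d c N * c N * p0 d (fst i) (snd i))\<^sup>2"
  consider "d = 1" | "d = 2" using d by blast
  then show ?thesis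
  proof cases
    case 1
    have var: "(\<Sum>k=1..N. return_prob k) / sqrt (real N) = ?var N" if "N \<ge> 1" for N
      unfolding 1 unfolding sum_Sigma_box_sq sum_p0_sq_box_one aN_mult_sq_one_dim[of c N, OF c that]
      by simp
    have b: "1 / sqrt (real N) = (aN d c N * c N)\<^sup>2" if "N \<ge> 1" for N
      unfolding 1 aN_mult_sq_one_dim[of c N, OF c that] ..
    show ?thesis
    proof (rule that)
      show "2 * sqrt wallis_const > 0"
        using wallis_const_pos by simp
      show "?var \<longlonglongrightarrow> 2 * sqrt wallis_const"
        by (rule Lim_transform_eventually[OF sum_return_prob_asymp eventually_sequentiallyI[of 1, OF var]])
      show "(\<lambda>N. (aN d c N * c N)\<^sup>2) \<longlonglongrightarrow> 0"
        by (rule Lim_transform_eventually[OF inverse_sqrt_tendsto_0 eventually_sequentiallyI[of 1, OF b]])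
    qed
  next
    case 2
    have var: "(\<Sum>k=1..N. (return_prob k)\<^sup>2) / ln (real N) = ?var N" if "N \<ge> 2" for N
      unfolding 2 unfolding sum_Sigma_box_sq sum_p0_sq_box_two aN_mult_sq_two_dim[of c N, OF c that]
      by simp
    have b: "1 / ln (real N) = (aN d c N * c N)\<^sup>2" if "N \<ge> 2" for N
      unfolding 2 aN_mult_sq_two_dim[of c N, OF c that] ..
    show ?thesis
    proof (rule that)
      show "wallis_const > 0"
        by (rule wallis_const_pos)
      show "?var \<longlonglongrightarrow> wallis_const"
        by (rule Lim_transform_eventually[OF sum_return_prob_sq_asymp eventually_sequentiallyI[of 2, OF var]])
      show "(\<lambda>N. (aN d c N * c N)\<^sup>2) \<longlonglongrightarrow> 0"
        by (rule Lim_transform_eventually[OF inverse_ln_tendsto_0 eventually_sequentiallyI[of 2, OF b]])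
    qed
  qed
qed

text \<open>Whatever \<open>c\<close> is, \<open>(a\<^sub>N c\<^sub>N)\<^sup>2\<close> equals \<open>1 / \<surd>N\<close> resp. \<open>1 / ln N\<close>.\<close>
theorem proposition30:
  fixes Q :: "'a measure" and h :: "nat \<Rightarrow> int list \<Rightarrow> 'a \<Rightarrow> real"
    and c :: "nat \<Rightarrow> real" and d :: nat
  assumes d: "d \<in> {1, 2}"
    and Q: "prob_space Q"
    and h_meas: "\<And>n x. length x = d \<Longrightarrow> h n x \<in> borel_measurable Q"
    and h_pm: "\<And>n x. length x = d \<Longrightarrow> AE \<omega> in Q. h n x \<omega> \<in> {-1, 1}"
    and h_half: "\<And>n x. length x = d \<Longrightarrow> measure Q {\<omega> \<in> space Q. h n x \<omega> = 1} = 1/2"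
    and h_indep: "prob_space.indep_vars Q (\<lambda>_. borel) (\<lambda>(n, x). h n x)
                    {(n, x). length x = d}"
    and c_pos: "\<And>N. c N > 0"
    and c1: "d = 1 \<Longrightarrow> (\<lambda>N. (c N)\<^sup>2 * sqrt (real N)) \<longlonglongrightarrow> 0"
    and c2: "d = 2 \<Longrightarrow> (\<lambda>N. (c N)\<^sup>2 * ln (real N)) \<longlonglongrightarrow> 0"
  shows "\<exists>\<mu> \<sigma>. \<sigma> > 0 \<and>
    weak_conv_m
      (\<lambda>N. distr Q borel (\<lambda>\<omega>. \<Sum>k=1..N. aN d c N * fk d c h N k \<omega>))
      (density lborel (normal_density \<mu> \<sigma>))"
proof -
  interpret prob_space Q by (rule Q)
  let ?b = "\<lambda>N. aN d c N * c N"
  have "c N \<noteq> 0" for N using c_pos[of N] by simp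
  then obtain s where s: "s > 0"
    "(\<lambda>N. \<Sum>i\<in>Sigma {1..N} (box d). (?b N * p0 d (fst i) (snd i))\<^sup>2) \<longlonglongrightarrow> s"
    "(\<lambda>N. (?b N)\<^sup>2) \<longlonglongrightarrow> 0"
    using normalised_variance_tendsto[OF d] by blast
  have small: "(?b N * p0 d k x)\<^sup>2 \<le> (?b N)\<^sup>2" for N k x
    using p0_nonneg[of d k x] p0_le_1[of d k x]
    by (simp add: power_mult_distrib mult_left_le power_le_one)
  have "weak_conv_m
      (\<lambda>N. distr Q borel (\<lambda>\<omega>. \<Sum>i\<in>Sigma {1..N} (box d). ?b N * p0 d (fst i) (snd i) * h (fst i) (snd i) \<omega>))
      (density lborel (normal_density 0 (sqrt s)))"
  proof (rule weak_conv_weighted_rademacher_sum[where X = "\<lambda>i. h (fst i) (snd i)"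
        and J = "{(n, x). length x = d}" and \<beta> = "\<lambda>N. (?b N)\<^sup>2"])
    show "indep_vars (\<lambda>_. borel) (\<lambda>i. h (fst i) (snd i)) {(n, x). length x = d}"
      using h_indep by (simp add: split_beta')
    show "finite (Sigma {1..N} (box d))" for N
      by (simp add: finite_box)
    show "Sigma {1..N} (box d) \<subseteq> {(n, x). length x = d}" for N
      by (auto simp: box_def)
  qed (use h_pm h_half s small in auto)
  with s(1) show ?thesis
    unfolding sum_aN_fk_eq by (intro exI conjI) simp_all
qed

end
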